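(* Consider the setting in the context. Let $\mathcal F=\{i_0,\dots,i_{\bar h-1}\}\subseteq[\bar n]$ be $\bar h$ distinct racks, $p\in[\bar h]$, and let $\widetilde{\mathbf{C}}$ be any codeword. (1) Let $b\in[1,u-v]$ and $\mathcal R\subseteq[\bar n]\setminus\mathcal F$ with $|\mathcal R|=\bar d$. For every $a\in[\bar s^{\bar n}]$ and $m\in[b]$, the quantities $\sum_{g=0}^{u-1}\theta^{gm}c^{(p+x)}_{i_pu+g,a}$ for $x\in[\bar s]$, and $H_{i_p,i}(a,m)$ for $i\in\mathcal F\setminus\{i_p\}$, are determined by (are linear functions of) the values $\{H_{i_p,j}(a',m): j\in\mathcal R,\ a'\in[\bar s^{\bar n}],\ m\in[b]\}$. (2) Let $b\in[u-v+1,u]$ and $\mathcal R'\subseteq[\bar n]\setminus\mathcal F$ with $|\mathcal R'|=\bar d+1$. For every $a\in[\bar s^{\bar n}]$ and $m\in[u-v,b)$, the quantities $\sum_{g=0}^{u-1}\theta^{gm}c^{(p+x)}_{i_pu+g,a}$ for $x\in[\bar s]$, and $H_{i_p,i}(a,m)$ for $i\in\mathcal F\setminus\{i_p\}$, are determined by (are linear functions of) the values $\{H_{i_p,j}(a',m): j\in\mathcal R',\ a'\in[\bar s^{\bar n}],\ m\in[u-v,b)\}$.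
   Context: $[N]=\{0,\dots,N-1\}$. Integers: $\bar n,u\ge2$ (with $u>1$), $\bar k$, $0\le v<u$, $n=\bar nu$, $k=\bar ku+v$, $r=n-k$, $\bar r=\bar n-\bar k$ (so $r=\bar ru-v$); $\bar d,\bar h,\delta$ with $\delta\in[1,\bar h)$ and $\bar k\le\bar d\le\bar n-\bar h$; $\bar s=\bar d-\bar k+1$. $\mathbb{F}$ is a finite field with $|\mathbb{F}|\ge n\bar s+1$ containing an element $\theta$ of multiplicative order $u$; $\xi$ is a primitive element of $\mathbb{F}$ and $\lambda_{i,j}=\xi^{i\bar s+j}$ for $i\in[\bar n]$, $j\in[\bar s]$. For $a\in[\bar s^{\bar n}]$ write $a=\sum_{i}a_i\bar s^i$ with $a_i\in[\bar s]$, and let $a(i,j)$ denote the integer whose $\bar s$-ary digits equal those of $a$ except the $i$-th digit is $j$. The code $\widetilde{\mathbf{C}}$ consists of all arrays $(c^{(y)}_{iu+g,a})$ over $\mathbb{F}$, indexed by $i\in[\bar n]$, $g\in[u]$, $a\in[\bar s^{\bar n}]$, $y\in[\bar s+\bar h-\delta]$ (node $iu+g$ stores $(c^{(y)}_{iu+g,a})_{y,a}$, a vector of length $(\bar s+\bar h-\delta)\bar s^{\bar n}$), satisfying $\sum_{i=0}^{\bar n-1}\sum_{g=0}^{u-1}\theta^{gt}\lambda_{i,a_i}^t c^{(y)}_{iu+g,a}=0$ for all $t\in[r]$, $a\in[\bar s^{\bar n}]$, $y\in[\bar s+\bar h-\delta]$. For $p\in[\bar h]$, rack $j\in[\bar n]\setminus\{i_p\}$,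 $a\in[\bar s^{\bar n}]$ and integer $m$, define $H_{i_p,j}(a,m)=\sum_{x=0}^{\bar s-1}\sum_{g=0}^{u-1}\theta^{gm}c^{(p+x)}_{ju+g,\,a(i_p,\,a_{i_p}\oplus x)}$, where superscripts are taken modulo $\bar s+\bar h-\delta$ and $\oplus$ is addition modulo $\bar s$. *)

theory Defs
  imports Main
begin

definition has_mult_order :: "'a::field \<Rightarrow> nat \<Rightarrow> bool" where
  "has_mult_order \<theta> u \<longleftrightarrow> 0 < u \<and> \<theta> ^ u = 1 \<and> (\<forall>k. 0 < k \<and> k < u \<longrightarrow> \<theta> ^ k \<noteq> 1)"

definition primitive_elem :: "'a::field \<Rightarrow> bool" where
  "primitive_elem \<xi> \<longleftrightarrow> (\<forall>x. x \<noteq> 0 \<longrightarrow> (\<exists>k::nat. x = \<xi> ^ k))"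

definition digit :: "nat \<Rightarrow> nat \<Rightarrow> nat \<Rightarrow> nat" where
  "digit s a i = (a div s ^ i) mod s"

definition setdig :: "nat \<Rightarrow> nat \<Rightarrow> nat \<Rightarrow> nat \<Rightarrow> nat" where
  "setdig s a i j = a - digit s a i * s ^ i + j * s ^ i"

definition lam :: "'a::field \<Rightarrow> nat \<Rightarrow> nat \<Rightarrow> nat \<Rightarrow> 'a" where
  "lam \<xi> s i j = \<xi> ^ (i * s + j)"

text \<open>Codeword condition. c y node a = c^{(y)}_{node,a}; L = s + h - delta.\<close>
definition is_codeword :: "'a::field \<Rightarrow> 'a \<Rightarrow> nat \<Rightarrow> nat \<Rightarrow> nat \<Rightarrow> nat \<Rightarrow> nat
    \<Rightarrow> (nat \<Rightarrow> nat \<Rightarrow> nat \<Rightarrow> 'a) \<Rightarrow> bool" where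
  "is_codeword \<theta> \<xi> nb u s r L c \<longleftrightarrow>
     (\<forall>t<r. \<forall>a<s ^ nb. \<forall>y<L.
        (\<Sum>i<nb. \<Sum>g<u. \<theta> ^ (g * t) * (lam \<xi> s i (digit s a i)) ^ t * c y (i * u + g) a) = 0)"

text \<open>H_{i_p,j}(a,m) (superscripts mod L, digit addition mod s).\<close>
definition Hval :: "'a::field \<Rightarrow> nat \<Rightarrow> nat \<Rightarrow> nat \<Rightarrow> (nat \<Rightarrow> nat \<Rightarrow> nat \<Rightarrow> 'a)
    \<Rightarrow> nat \<Rightarrow> nat \<Rightarrow> nat \<Rightarrow> nat \<Rightarrow> nat \<Rightarrow> 'a" where
  "Hval \<theta> u s L c p ip j a m =
     (\<Sum>x<s. \<Sum>g<u. \<theta> ^ (g * m) *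
        c ((p + x) mod L) (j * u + g) (setdig s a ip ((digit s a ip + x) mod s)))"

definition Nodeval :: "'a::field \<Rightarrow> nat \<Rightarrow> (nat \<Rightarrow> nat \<Rightarrow> nat \<Rightarrow> 'a)
    \<Rightarrow> nat \<Rightarrow> nat \<Rightarrow> nat \<Rightarrow> nat \<Rightarrow> 'a" where
  "Nodeval \<theta> u c y i a m = (\<Sum>g<u. \<theta> ^ (g * m) * c y (i * u + g) a)"

definition lin_det :: "'a::field \<Rightarrow> 'a \<Rightarrow> nat \<Rightarrow> nat \<Rightarrow> nat \<Rightarrow> nat \<Rightarrow> nat
    \<Rightarrow> nat \<Rightarrow> nat \<Rightarrow> nat set \<Rightarrow> nat set
    \<Rightarrow> ((nat \<Rightarrow> nat \<Rightarrow> nat \<Rightarrow> 'a) \<Rightarrow> 'a) \<Rightarrow> bool" where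
  "lin_det \<theta> \<xi> nb u s r L p ip R M q \<longleftrightarrow>
     (\<exists>coef :: nat \<Rightarrow> nat \<Rightarrow> nat \<Rightarrow> 'a. \<forall>c. is_codeword \<theta> \<xi> nb u s r L c \<longrightarrow>
        q c = (\<Sum>j\<in>R. \<Sum>a'<s ^ nb. \<Sum>m'\<in>M. coef j a' m' * Hval \<theta> u s L c p ip j a' m'))"

end

theory Submission
  imports Defs "HOL-Computational_Algebra.Polynomial" "HOL-Number_Theory.Cong"
begin

text \<open>Apply the parity checks with rows \<open>t = m + u w\<close> to the \<open>s\<close>
  shifted words \<open>a(i\<^sub>p, a\<^sub>i\<^sub>p \<oplus> x)\<close> in layer \<open>p + x\<close> and add them up over \<open>x\<close>. Because
  \<open>\<theta> ^ u = 1\<close>, the factor \<open>\<theta> ^ (g t)\<close> becomes \<open>\<theta> ^ (g m)\<close>. A helper rack \<open>i\<close> then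
  contributes \<open>\<lambda>\<^sub>i\<^sub>,\<^sub>a\<^sub>i ^ (u w + m)\<close> times \<open>H\<^sub>i\<^sub>p\<^sub>,\<^sub>i(a, m)\<close>, while rack \<open>i\<^sub>p\<close> keeps
  its \<open>s\<close> node sums apart. This gives a Vandermonde system in the \<open>nb - 1 + s\<close> distinct
  points \<open>\<lambda> ^ u\<close>. Once the values of the helper racks in \<open>R\<close> are known, at most
  \<open>nb - kb\<close> unknowns remain (\<open>nb - kb - 1\<close> in the second case). The same number of
  rows \<open>w\<close> keep \<open>m + u w\<close> below \<open>r\<close>, so every remaining unknown is a linear
  combination of the known ones.\<close>

section \<open>Vandermonde elimination\<close>

lemma power_sums_vanish_imp_poly_sum_vanish:
  fixes Z V :: "'b \<Rightarrow> 'a::field"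
  assumes "degree P < N" and "\<forall>w<N. (\<Sum>k\<in>J. Z k ^ w * V k) = 0"
  shows "(\<Sum>k\<in>J. poly P (Z k) * V k) = 0"
proof -
  have poly_P: "poly P x = (\<Sum>w<N. coeff P w * x ^ w)" for x
    unfolding poly_altdef using assms(1)
    by (intro sum.mono_neutral_left) (auto simp: coeff_eq_0)
  have "(\<Sum>k\<in>J. poly P (Z k) * V k) = (\<Sum>w<N. coeff P w * (\<Sum>k\<in>J. Z k ^ w * V k))"
    unfolding poly_P sum_distrib_left sum_distrib_right by (subst sum.swap) (simp add: mult_ac)
  also have "\<dots> = 0" using assms(2) by simp
  finally show ?thesis .
qed

text \<open>Pairing the power sums with the polynomial that vanishes at the points of the
  other unknowns isolates the unknown at \<open>t\<close>.\<close>

lemma vandermonde_elimination: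
  fixes Z :: "'b \<Rightarrow> 'a::field"
  assumes J: "finite J" and R: "R \<subseteq> J" and t: "t \<in> J - R"
    and Z: "inj_on Z J" and N: "card (J - R) \<le> N"
  shows "\<exists>coef. \<forall>V. (\<forall>w<N. (\<Sum>k\<in>J. Z k ^ w * V k) = 0) \<longrightarrow> V t = (\<Sum>k\<in>R. coef k * V k)"
proof -
  define S where "S = J - R - {t}"
  define P where "P = (\<Prod>k\<in>S. [:- Z k, 1:])"
  have S: "finite S" using J by (simp add: S_def)
  have "degree P \<le> card S"
    using degree_prod_sum_le[OF S, of "\<lambda>k. [:- Z k, 1:]"] by (simp add: P_def)
  also have "card S < card (J - R)"
    unfolding S_def using J t by (intro card_Diff1_less) auto
  finally have deg: "degree P < N" using N by linarith
  have poly_P: "poly P x = (\<Prod>k\<in>S. x - Z k)" for x by (simp add: P_def poly_prod)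
  have P_t: "poly P (Z t) \<noteq> 0"
    using S t Z by (auto simp: poly_P S_def dest: inj_onD)
  have P_S: "poly P (Z k) = 0" if "k \<in> S" for k
    using S that by (auto simp: poly_P)
  have J_split: "J = R \<union> (insert t S)" using R t by (auto simp: S_def)
  show ?thesis
  proof (intro exI allI impI)
    fix V :: "'b \<Rightarrow> 'a"
    assume "\<forall>w<N. (\<Sum>k\<in>J. Z k ^ w * V k) = 0"
    then have "0 = (\<Sum>k\<in>J. poly P (Z k) * V k)"
      using power_sums_vanish_imp_poly_sum_vanish[OF deg] by simp
    also have "\<dots> = (\<Sum>k\<in>R. poly P (Z k) * V k) + (\<Sum>k\<in>insert t S. poly P (Z k) * V k)"
      unfolding J_split using J R S t by (intro sum.union_disjoint) (auto simp: S_def finite_subset)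
    also have "(\<Sum>k\<in>insert t S. poly P (Z k) * V k) = poly P (Z t) * V t"
      using S P_S by (subst sum.insert) (auto simp: S_def)
    finally have "V t = - (\<Sum>k\<in>R. poly P (Z k) * V k) / poly P (Z t)"
      using P_t by (simp add: field_simps eq_neg_iff_add_eq_0)
    then show "V t = (\<Sum>k\<in>R. - poly P (Z k) / poly P (Z t) * V k)"
      by (simp add: sum_divide_distrib sum_negf)
  qed
qed

section \<open>Base-\<open>s\<close> digits\<close>

lemma digit_less: "0 < s \<Longrightarrow> digit s a i < s"
  by (simp add: digit_def)

lemma digit_div_power:
  assumes "n \<le> k"
  shows "digit s (a div s ^ n) (k - n) = digit s a k"
proof -
  have "s ^ k = s ^ n * s ^ (k - n)" using assms by (simp flip: power_add)
  then show ?thesis by (simp add: digit_def div_mult2_eq)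
qed

lemma digit_mod_power:
  assumes "0 < s" "k < n"
  shows "digit s (a mod s ^ n) k = digit s a k"
proof -
  have "s ^ n = s ^ k * s ^ (n - k)" using assms(2) by (simp flip: power_add)
  then have "a mod s ^ n div s ^ k = a div s ^ k mod s ^ (n - k)"
    using assms(1) by (simp add: mod_mult2_eq)
  then show ?thesis
    using assms(2) by (simp add: digit_def mod_mod_cancel)
qed

lemma place_value_decomp: "a = a div s ^ Suc i * s ^ Suc i + digit s a i * s ^ i + a mod s ^ i"
proof -
  have "a div s ^ Suc i = a div s ^ i div s"
    by (simp only: power_Suc2 div_mult2_eq)
  then have "a div s ^ i = a div s ^ Suc i * s + digit s a i"
    by (simp add: digit_def)
  then have "a div s ^ i * s ^ i = a div s ^ Suc i * s ^ Suc i + digit s a i * s ^ i"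
    by (simp add: algebra_simps)
  then show ?thesis by (metis div_mult_mod_eq)
qed

lemma setdig_altdef: "setdig s a i j = a div s ^ Suc i * s ^ Suc i + j * s ^ i + a mod s ^ i"
proof -
  have "a - digit s a i * s ^ i = a div s ^ Suc i * s ^ Suc i + a mod s ^ i"
    by (subst (1) place_value_decomp[of a s i]) simp
  then show ?thesis by (simp add: setdig_def)
qed

lemma place_value:
  assumes "0 < s" "B < s ^ i" "j < s"
  shows "(A * s ^ Suc i + j * s ^ i + B) div s ^ Suc i = A"
    and "(A * s ^ Suc i + j * s ^ i + B) mod s ^ i = B"
    and "digit s (A * s ^ Suc i + j * s ^ i + B) i = j"
proof -
  have eq: "A * s ^ Suc i + j * s ^ i + B = (A * s + j) * s ^ i + B"
    by (simp add: algebra_simps)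
  have high: "(A * s ^ Suc i + j * s ^ i + B) div s ^ i = A * s + j"
    unfolding eq using assms by simp
  then show "(A * s ^ Suc i + j * s ^ i + B) div s ^ Suc i = A"
    using assms by (simp only: power_Suc2 div_mult2_eq) simp
  show "digit s (A * s ^ Suc i + j * s ^ i + B) i = j"
    unfolding digit_def high using assms by simp
  show "(A * s ^ Suc i + j * s ^ i + B) mod s ^ i = B"
    unfolding eq using assms by simp
qed

lemma digit_setdig_same: "0 < s \<Longrightarrow> j < s \<Longrightarrow> digit s (setdig s a i j) i = j"
  unfolding setdig_altdef by (rule place_value(3)) simp_all

lemma digit_setdig_other:
  assumes "0 < s" "j < s" "k \<noteq> i"
  shows "digit s (setdig s a i j) k = digit s a k"
proof (cases "k < i")
  case True
  have "setdig s a i j mod s ^ i = a mod s ^ i"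
    unfolding setdig_altdef using place_value(2) assms by simp
  then show ?thesis
    using digit_mod_power[OF assms(1) True] by metis
next
  case False
  then have "Suc i \<le> k" using assms(3) by simp
  moreover have "setdig s a i j div s ^ Suc i = a div s ^ Suc i"
    unfolding setdig_altdef using place_value(1) assms by simp
  ultimately show ?thesis
    using digit_div_power by metis
qed

lemma setdig_setdig: "0 < s \<Longrightarrow> j < s \<Longrightarrow> setdig s (setdig s a i j) i j' = setdig s a i j'"
  unfolding setdig_altdef[of s "setdig s a i j"] using place_value(1,2)
  by (simp add: setdig_altdef)

lemma setdig_digit: "setdig s a i (digit s a i) = a"
proof -
  have "digit s a i * s ^ i \<le> a" using place_value_decomp[of a s i] by linarith
  then show ?thesis by (simp add: setdig_def)
qed

lemma setdig_less_power:
  assumes "0 < s" "a < s ^ n" "i < n" "j < s"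
  shows "setdig s a i j < s ^ n"
proof -
  define A where "A = a div s ^ Suc i"
  have "n = (n - Suc i) + Suc i" using assms(3) by simp
  then have pow: "s ^ n = s ^ (n - Suc i) * s ^ Suc i" by (metis power_add)
  then have A: "Suc A \<le> s ^ (n - Suc i)" unfolding A_def using assms(1,2)
    by (simp add: Suc_le_eq div_less_iff_less_mult)
  have "setdig s a i j < A * s ^ Suc i + Suc j * s ^ i"
    unfolding setdig_altdef A_def using assms(1) by simp
  also have "\<dots> \<le> A * s ^ Suc i + s ^ Suc i"
    using mult_right_mono[of "Suc j" s "s ^ i"] assms(4) by (simp add: mult.commute[of s])
  also have "\<dots> \<le> s ^ n"
    unfolding pow using mult_right_mono[OF A, of "s ^ Suc i"] by simp
  finally show ?thesis .
qed

lemma mod_add_left_cancel_less: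
  fixes d x y :: nat
  assumes "(d + x) mod s = (d + y) mod s" "x < s" "y < s"
  shows "x = y"
proof -
  have "[x = y] (mod s)" using assms(1) cong_add_lcancel_nat[of d x y s] by (simp add: cong_def)
  then show ?thesis using assms(2,3) by (rule cong_less_modulus_unique_nat)
qed

definition shift_digit :: "nat \<Rightarrow> nat \<Rightarrow> nat \<Rightarrow> nat \<Rightarrow> nat" where
  "shift_digit s a i x = setdig s a i ((digit s a i + x) mod s)"

lemma digit_shift_digit_same: "0 < s \<Longrightarrow> digit s (shift_digit s a i x) i = (digit s a i + x) mod s"
  by (simp add: shift_digit_def digit_setdig_same)

lemma digit_shift_digit_other: "0 < s \<Longrightarrow> k \<noteq> i \<Longrightarrow> digit s (shift_digit s a i x) k = digit s a k"
  by (simp add: shift_digit_def digit_setdig_other)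

lemma shift_digit_less_power: "0 < s \<Longrightarrow> a < s ^ n \<Longrightarrow> i < n \<Longrightarrow> shift_digit s a i x < s ^ n"
  by (simp add: shift_digit_def setdig_less_power)

lemma shift_digit_shift_digit_complement:
  assumes "0 < s" "x < s"
  shows "shift_digit s (shift_digit s a i (s - x)) i x = a"
proof -
  define d where "d = (digit s a i + (s - x)) mod s"
  have "(d + x) mod s = (digit s a i + s) mod s"
    using assms(2) by (simp add: d_def mod_add_left_eq)
  also have "\<dots> = digit s a i"
    using digit_less[OF assms(1)] by simp
  moreover have "d < s" using assms(1) by (simp add: d_def)
  ultimately show ?thesis
    using assms(1) by (simp add: shift_digit_def digit_setdig_same setdig_setdig setdig_digit flip: d_def)
qed

lemma Hval_eq_sum_Nodeval:
  "Hval \<theta> u s L c p ip j a m = (\<Sum>x<s. Nodeval \<theta> u c ((p + x) mod L) j (shift_digit s a ip x) m)"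
  by (simp add: Hval_def Nodeval_def shift_digit_def)

section \<open>Powers of a primitive element\<close>

lemma primitive_elem_nonzero:
  fixes \<xi> :: "'a::{field,finite}"
  assumes "primitive_elem \<xi>" and "2 < card (UNIV :: 'a set)"
  shows "\<xi> \<noteq> 0"
proof
  assume "\<xi> = 0"
  have "x \<in> {0, 1}" for x :: 'a
  proof (cases "x = 0")
    case False
    then obtain k where "x = \<xi> ^ k" using assms(1) unfolding primitive_elem_def by blast
    then show ?thesis using \<open>\<xi> = 0\<close> by (cases k) auto
  qed simp
  then have "UNIV \<subseteq> {0, 1::'a}" by blast
  then have "card (UNIV :: 'a set) \<le> card {0, 1::'a}" by (intro card_mono) auto
  then show False using assms(2) by (simp add: card_insert_if)
qed

text \<open>If \<open>\<xi> ^ e = 1\<close> then every power of \<open>\<xi>\<close> is one of \<open>\<xi> ^ 0, \<dots>, \<xi> ^ (e - 1)\<close>,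
  so a primitive element has no such \<open>e\<close> below the order of the multiplicative group.\<close>

lemma primitive_elem_power_inj:
  fixes \<xi> :: "'a::{field,finite}"
  assumes prim: "primitive_elem \<xi>" and nz: "\<xi> \<noteq> 0"
    and "i < card (UNIV :: 'a set) - 1" "j < card (UNIV :: 'a set) - 1" "\<xi> ^ i = \<xi> ^ j"
  shows "i = j"
proof (rule ccontr)
  assume "i \<noteq> j"
  then obtain i' j' where ij: "i' < j'" "j' < card (UNIV :: 'a set) - 1" "\<xi> ^ i' = \<xi> ^ j'"
    using assms(3-5) by (metis linorder_neqE_nat)
  define e where "e = j' - i'"
  have "\<xi> ^ j' = \<xi> ^ i' * \<xi> ^ e" using ij(1) by (simp add: e_def flip: power_add)
  then have period: "\<xi> ^ e = 1" using ij(3) nz by simp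
  have cover: "UNIV - {0} \<subseteq> (\<lambda>k. \<xi> ^ k) ` {..<e}"
  proof
    fix x :: 'a
    assume "x \<in> UNIV - {0}"
    then obtain k where k: "x = \<xi> ^ k" using prim unfolding primitive_elem_def by blast
    have "\<xi> ^ k = \<xi> ^ (k mod e) * (\<xi> ^ e) ^ (k div e)"
      by (metis power_add power_mult mod_div_decomp add.commute mult.commute)
    then have "x = \<xi> ^ (k mod e)" using k period by simp
    moreover have "k mod e < e" using ij(1) by (simp add: e_def)
    ultimately show "x \<in> (\<lambda>k. \<xi> ^ k) ` {..<e}" by blast
  qed
  have "card (UNIV - {0::'a}) \<le> e"
    using card_mono[OF _ cover] card_image_le[of "{..<e}" "\<lambda>k. \<xi> ^ k"] by simp
  then show False using ij(1,2) by (simp add: e_def card_Diff_singleton)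
qed

lemma lam_power_inj:
  fixes \<xi> :: "'a::{field,finite}"
  assumes "primitive_elem \<xi>" "\<xi> \<noteq> 0" "nb * u * s + 1 \<le> card (UNIV :: 'a set)" "0 < u"
    and "i < nb" "i' < nb" "j < s" "j' < s"
    and "lam \<xi> s i j ^ u = lam \<xi> s i' j' ^ u"
  shows "i = i' \<and> j = j'"
proof -
  have bound: "(k * s + l) * u < card (UNIV :: 'a set) - 1" if "k < nb" "l < s" for k l
  proof -
    have "k * s + l < Suc k * s" using that(2) by simp
    also have "\<dots> \<le> nb * s" using that(1) by (intro mult_right_mono) auto
    finally have "k * s + l < nb * s" .
    then have "(k * s + l) * u < nb * s * u" using assms(4) by simp
    then show ?thesis using assms(3) by (simp only: mult_ac)
  qed
  have "(i * s + j) * u = (i' * s + j') * u"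
    using primitive_elem_power_inj[OF assms(1,2) bound bound] assms(5-9)
    by (simp add: lam_def power_mult)
  then have "i * s + j = i' * s + j'" using assms(4) by simp
  then have "(i * s + j) div s = (i' * s + j') div s" "(i * s + j) mod s = (i' * s + j') mod s"
    by simp_all
  then show ?thesis using assms(7,8) by simp
qed

section \<open>The repair system\<close>

text \<open>Since \<open>\<theta> ^ u = 1\<close>, the check with row \<open>t = m + u * w\<close> only sees \<open>t mod u = m\<close> through
  \<open>\<theta>\<close>, so it becomes a power sum in the points \<open>\<lambda> ^ u\<close> with exponent \<open>w\<close>.\<close>

lemma codeword_check_power_sum:
  assumes "is_codeword \<theta> \<xi> nb u s r L c" and "\<theta> ^ u = 1"
    and "a < s ^ nb" and "y < L" and "m + u * w < r"
  shows "(\<Sum>i<nb. (lam \<xi> s i (digit s a i) ^ u) ^ w *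
            (lam \<xi> s i (digit s a i) ^ m * Nodeval \<theta> u c y i a m)) = 0"
proof -
  have theta: "\<theta> ^ (g * (m + u * w)) = \<theta> ^ (g * m)" for g
  proof -
    have "\<theta> ^ (g * (m + u * w)) = \<theta> ^ (g * m) * (\<theta> ^ u) ^ (g * w)"
      by (simp add: algebra_simps flip: power_add power_mult)
    then show ?thesis using assms(2) by simp
  qed
  have lambda: "z ^ (m + u * w) = (z ^ u) ^ w * z ^ m" for z :: 'a
    by (simp add: power_add power_mult)
  have "(\<Sum>i<nb. \<Sum>g<u. \<theta> ^ (g * (m + u * w)) * lam \<xi> s i (digit s a i) ^ (m + u * w)
          * c y (i * u + g) a) = 0"
    using assms(1,3-5) unfolding is_codeword_def by blast
  then show ?thesis
    unfolding theta lambda Nodeval_def by (simp add: sum_distrib_left mult_ac)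
qed

text \<open>The unknowns of the repair system: index \<open>k < nb\<close> stands for the helper rack \<open>k\<close>
  (value \<open>H\<^sub>i\<^sub>p\<^sub>,\<^sub>k(a, m)\<close>), index \<open>nb + x\<close> for the failed rack \<open>ip\<close> at the shifted
  word \<open>a(ip, a\<^sub>i\<^sub>p \<oplus> x)\<close> in layer \<open>p + x\<close>.\<close>

definition repair_index :: "nat \<Rightarrow> nat \<Rightarrow> nat \<Rightarrow> nat set" where
  "repair_index nb s ip = ({..<nb} - {ip}) \<union> (+) nb ` {..<s}"

definition repair_locator :: "'a::field \<Rightarrow> nat \<Rightarrow> nat \<Rightarrow> nat \<Rightarrow> nat \<Rightarrow> nat \<Rightarrow> 'a" where
  "repair_locator \<xi> nb s ip a k =
     (if k < nb then lam \<xi> s k (digit s a k) else lam \<xi> s ip ((digit s a ip + (k - nb)) mod s))"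

definition repair_value :: "'a::field \<Rightarrow> nat \<Rightarrow> nat \<Rightarrow> nat \<Rightarrow> nat \<Rightarrow> (nat \<Rightarrow> nat \<Rightarrow> nat \<Rightarrow> 'a)
    \<Rightarrow> nat \<Rightarrow> nat \<Rightarrow> nat \<Rightarrow> nat \<Rightarrow> nat \<Rightarrow> 'a" where
  "repair_value \<theta> nb u s L c p ip a m k =
     (if k < nb then Hval \<theta> u s L c p ip k a m
      else Nodeval \<theta> u c ((p + (k - nb)) mod L) ip (shift_digit s a ip (k - nb)) m)"

lemma finite_repair_index: "finite (repair_index nb s ip)"
  by (simp add: repair_index_def)

lemma card_repair_index: "ip < nb \<Longrightarrow> card (repair_index nb s ip) = nb - 1 + s"
  unfolding repair_index_def by (subst card_Un_disjoint) (auto simp: card_image)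

lemma inj_on_repair_locator_power:
  fixes \<xi> :: "'a::{field,finite}"
  assumes "primitive_elem \<xi>" "\<xi> \<noteq> 0" "nb * u * s + 1 \<le> card (UNIV :: 'a set)" "0 < u" "0 < s"
    and "ip < nb"
  shows "inj_on (\<lambda>k. repair_locator \<xi> nb s ip a k ^ u) (repair_index nb s ip)"
proof (rule inj_onI)
  fix k k'
  assume k: "k \<in> repair_index nb s ip" and k': "k' \<in> repair_index nb s ip"
    and eq: "repair_locator \<xi> nb s ip a k ^ u = repair_locator \<xi> nb s ip a k' ^ u"
  define rack where "rack k = (if k < nb then k else ip)" for k
  define dig where "dig k = (if k < nb then digit s a k else (digit s a ip + (k - nb)) mod s)" for k
  have "repair_locator \<xi> nb s ip a k = lam \<xi> s (rack k) (dig k)" for k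
    by (simp add: repair_locator_def rack_def dig_def)
  then have "rack k = rack k' \<and> dig k = dig k'"
    using eq assms(6) by (intro lam_power_inj[OF assms(1-4)]) (auto simp: rack_def dig_def digit_less assms(5))
  then show "k = k'"
    using k k' by (auto simp: repair_index_def rack_def dig_def split: if_splits
        dest: mod_add_left_cancel_less)
qed

lemma repair_power_sums_vanish:
  assumes cw: "is_codeword \<theta> \<xi> nb u s r L c" and theta: "\<theta> ^ u = 1" and s: "0 < s" and L: "0 < L"
    and ip: "ip < nb" and a: "a < s ^ nb" and check: "m + u * w < r"
  shows "(\<Sum>k\<in>repair_index nb s ip. (repair_locator \<xi> nb s ip a k ^ u) ^ w *
            (repair_locator \<xi> nb s ip a k ^ m * repair_value \<theta> nb u s L c p ip a m k)) = 0"
proof -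
  define T where "T k = (repair_locator \<xi> nb s ip a k ^ u) ^ w *
    (repair_locator \<xi> nb s ip a k ^ m * repair_value \<theta> nb u s L c p ip a m k)" for k
  define f where "f i x = (lam \<xi> s i (digit s (shift_digit s a ip x) i) ^ u) ^ w *
    (lam \<xi> s i (digit s (shift_digit s a ip x) i) ^ m *
     Nodeval \<theta> u c ((p + x) mod L) i (shift_digit s a ip x) m)" for i x
  have rows: "(\<Sum>i<nb. f i x) = 0" for x
    unfolding f_def using s L ip a check
    by (intro codeword_check_power_sum[OF cw theta]) (simp_all add: shift_digit_less_power)
  have helpers: "(\<Sum>x<s. f i x) = T i" if "i \<in> {..<nb} - {ip}" for i
    using that s
    by (simp add: f_def T_def repair_locator_def repair_value_def digit_shift_digit_other
        Hval_eq_sum_Nodeval sum_distrib_left)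
  have failed: "f ip x = T (nb + x)" for x
    using s by (simp add: f_def T_def repair_locator_def repair_value_def digit_shift_digit_same)
  have "0 = (\<Sum>x<s. \<Sum>i<nb. f i x)" using rows by simp
  also have "\<dots> = (\<Sum>i<nb. \<Sum>x<s. f i x)" by (rule sum.swap)
  also have "\<dots> = (\<Sum>i\<in>{..<nb} - {ip}. \<Sum>x<s. f i x) + (\<Sum>x<s. f ip x)"
    using ip by (simp add: sum.remove add.commute)
  also have "\<dots> = (\<Sum>k\<in>{..<nb} - {ip}. T k) + (\<Sum>k\<in>(+) nb ` {..<s}. T k)"
    using helpers failed by (simp add: sum.reindex)
  also have "\<dots> = (\<Sum>k\<in>repair_index nb s ip. T k)"
    unfolding repair_index_def by (rule sum.union_disjoint[symmetric]) auto
  finally show ?thesis by (simp add: T_def)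
qed

lemma lin_det_single_term:
  assumes "a < s ^ nb" "finite M" "m \<in> M"
    and "\<And>c. is_codeword \<theta> \<xi> nb u s r L c \<Longrightarrow> q c = (\<Sum>j\<in>R. K j * Hval \<theta> u s L c p ip j a m)"
  shows "lin_det \<theta> \<xi> nb u s r L p ip R M q"
  unfolding lin_det_def
proof (intro exI allI impI)
  fix c
  assume "is_codeword \<theta> \<xi> nb u s r L c"
  have single: "(\<Sum>a'<s ^ nb. \<Sum>m'\<in>M. if a' = a \<and> m' = m then X else 0) = X" for X :: 'a
  proof -
    have "(\<Sum>m'\<in>M. if a' = a \<and> m' = m then X else 0) = (if a' = a then X else 0)" for a'
      using assms(2,3) by (cases "a' = a") simp_all
    then show ?thesis using assms(1) by simp
  qed
  show "q c = (\<Sum>j\<in>R. \<Sum>a'<s ^ nb. \<Sum>m'\<in>M.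
      (if a' = a \<and> m' = m then K j else 0) * Hval \<theta> u s L c p ip j a' m')"
    using assms(4)[OF \<open>is_codeword \<theta> \<xi> nb u s r L c\<close>]
    by (simp add: if_distrib[of "\<lambda>x. x * _"] single cong: if_cong)
qed

lemma repair_value_lin_det:
  fixes \<theta> \<xi> :: "'a::{field,finite}"
  assumes prim: "primitive_elem \<xi>" and nz: "\<xi> \<noteq> 0"
    and card: "nb * u * s + 1 \<le> card (UNIV :: 'a set)" and u: "0 < u" and s: "0 < s" and L: "0 < L"
    and theta: "\<theta> ^ u = 1" and ip: "ip < nb" and a: "a < s ^ nb"
    and R: "R \<subseteq> {..<nb} - {ip}" and t: "t \<in> repair_index nb s ip - R"
    and N: "card (repair_index nb s ip - R) \<le> N" and checks: "\<forall>w<N. m + u * w < r"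
    and M: "finite M" "m \<in> M"
  shows "lin_det \<theta> \<xi> nb u s r L p ip R M (\<lambda>c. repair_value \<theta> nb u s L c p ip a m t)"
proof -
  let ?\<Lambda> = "repair_locator \<xi> nb s ip a"
  let ?V = "\<lambda>c. repair_value \<theta> nb u s L c p ip a m"
  have "R \<subseteq> repair_index nb s ip" using R by (auto simp: repair_index_def)
  then obtain coef where coef: "\<And>V. \<forall>w<N. (\<Sum>k\<in>repair_index nb s ip. (?\<Lambda> k ^ u) ^ w * V k) = 0
      \<Longrightarrow> V t = (\<Sum>k\<in>R. coef k * V k)"
    using vandermonde_elimination[OF finite_repair_index _ t
        inj_on_repair_locator_power[OF prim nz card u s ip] N] by blast
  have \<Lambda>_nz: "?\<Lambda> k ^ m \<noteq> 0" for k using nz by (simp add: repair_locator_def lam_def)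
  show ?thesis
  proof (rule lin_det_single_term[OF a M, where K = "\<lambda>k. coef k * ?\<Lambda> k ^ m / ?\<Lambda> t ^ m"])
    fix c
    assume cw: "is_codeword \<theta> \<xi> nb u s r L c"
    have "?\<Lambda> t ^ m * ?V c t = (\<Sum>k\<in>R. coef k * (?\<Lambda> k ^ m * ?V c k))"
      using repair_power_sums_vanish[OF cw theta s L ip a] checks by (intro coef) blast
    also have "\<dots> = ?\<Lambda> t ^ m * (\<Sum>k\<in>R. coef k * ?\<Lambda> k ^ m / ?\<Lambda> t ^ m * Hval \<theta> u s L c p ip k a m)"
      using R \<Lambda>_nz by (auto simp: sum_distrib_left repair_value_def intro!: sum.cong)
    finally show "?V c t = (\<Sum>k\<in>R. coef k * ?\<Lambda> k ^ m / ?\<Lambda> t ^ m * Hval \<theta> u s L c p ip k a m)"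
      by (simp only: mult_left_cancel[OF \<Lambda>_nz])
  qed
qed

lemma repair_lin_det:
  fixes \<theta> \<xi> :: "'a::{field,finite}"
  assumes prim: "primitive_elem \<xi>" and nz: "\<xi> \<noteq> 0"
    and card: "nb * u * s + 1 \<le> card (UNIV :: 'a set)" and u: "0 < u" and s: "0 < s" and L: "0 < L"
    and theta: "\<theta> ^ u = 1" and F: "F \<subseteq> {..<nb}" "ip \<in> F"
    and R: "R \<subseteq> {..<nb} - F" and N: "nb - 1 + s - card R \<le> N"
    and checks: "\<forall>m\<in>M. \<forall>w<N. m + u * w < r" and M: "finite M"
  shows "\<forall>a<s ^ nb. \<forall>m\<in>M.
      (\<forall>x<s. lin_det \<theta> \<xi> nb u s r L p ip R M (\<lambda>c. Nodeval \<theta> u c ((p + x) mod L) ip a m)) \<and>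
      (\<forall>i\<in>F - {ip}. lin_det \<theta> \<xi> nb u s r L p ip R M (\<lambda>c. Hval \<theta> u s L c p ip i a m))"
proof (intro allI impI ballI conjI)
  fix a m
  assume a: "a < s ^ nb" and m: "m \<in> M"
  have ip: "ip < nb" using F by auto
  have R': "R \<subseteq> {..<nb} - {ip}" using R F by auto
  have "R \<subseteq> repair_index nb s ip" using R' by (auto simp: repair_index_def)
  then have "card (repair_index nb s ip - R) = nb - 1 + s - card R"
    using finite_subset[OF R'] by (simp add: card_Diff_subset card_repair_index[OF ip])
  then have N': "card (repair_index nb s ip - R) \<le> N" using N by simp
  note lin_det = repair_value_lin_det[OF prim nz card u s L theta ip _ R' _ N' _ M m]
  show "lin_det \<theta> \<xi> nb u s r L p ip R M (\<lambda>c. Hval \<theta> u s L c p ip i a m)" if "i \<in> F - {ip}" for i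
  proof -
    have "i < nb" "i \<noteq> ip" "i \<notin> R" using that F R by auto
    then show ?thesis
      using lin_det[OF a, of i] checks m by (simp add: repair_index_def repair_value_def)
  qed
  show "lin_det \<theta> \<xi> nb u s r L p ip R M (\<lambda>c. Nodeval \<theta> u c ((p + x) mod L) ip a m)" if "x < s" for x
  proof -
    define a' where "a' = shift_digit s a ip (s - x)"
    have "a' < s ^ nb" using s a ip by (simp add: a'_def shift_digit_less_power)
    moreover have "shift_digit s a' ip x = a"
      using s that by (simp add: a'_def shift_digit_shift_digit_complement)
    moreover have "nb + x \<notin> R" using R by auto
    ultimately show ?thesis
      using lin_det[of a' "nb + x"] that checks m by (simp add: repair_index_def repair_value_def)
  qed
qed

lemma check_row_lt_redundancy_low:
  fixes m u v w nb kb :: nat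
  assumes "m < u - v" "w < nb - kb"
  shows "m + u * w < nb * u - (kb * u + v)"
proof -
  have "Suc w * u \<le> nb * u - kb * u"
    using assms(2) mult_le_mono1[of "Suc w" "nb - kb" u] by (simp add: diff_mult_distrib)
  then show ?thesis using assms(1) by (simp add: mult.commute[of u])
qed

lemma check_row_lt_redundancy_high:
  fixes m u v w nb kb :: nat
  assumes "m < u" "v < u" "w < nb - kb - 1"
  shows "m + u * w < nb * u - (kb * u + v)"
proof -
  have "(w + 2) * u \<le> nb * u - kb * u"
    using assms(3) mult_le_mono1[of "w + 2" "nb - kb" u] by (simp add: diff_mult_distrib)
  then show ?thesis using assms(1,2) by (simp add: mult.commute[of u])
qed

theorem lemma1:
  fixes \<theta> \<xi> :: "'a::{field,finite}"
    and nb u kb v db hb \<delta> p :: nat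
    and ifam :: "nat \<Rightarrow> nat"
  assumes "nb \<ge> 2" and "u \<ge> 2" and "v < u"
    and "1 \<le> \<delta>" and "\<delta> < hb"
    and "kb \<le> db" and "db \<le> nb - hb" and "hb \<le> nb"
    and "card (UNIV :: 'a set) \<ge> nb * u * (db - kb + 1) + 1"
    and "has_mult_order \<theta> u"
    and "primitive_elem \<xi>"
    and "inj_on ifam {..<hb}" and "ifam ` {..<hb} \<subseteq> {..<nb}"
    and "p < hb"
  shows
   "(\<forall>b R. 1 \<le> b \<and> b \<le> u - v \<and> R \<subseteq> {..<nb} - ifam ` {..<hb} \<and> card R = db \<longrightarrow>
      (\<forall>a < (db - kb + 1) ^ nb. \<forall>m < b.
        (\<forall>x < db - kb + 1.
           lin_det \<theta> \<xi> nb u (db - kb + 1) (nb * u - (kb * u + v)) (db - kb + 1 + hb - \<delta>)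
             p (ifam p) R {..<b}
             (\<lambda>c. Nodeval \<theta> u c ((p + x) mod (db - kb + 1 + hb - \<delta>)) (ifam p) a m)) \<and>
        (\<forall>i \<in> ifam ` {..<hb} - {ifam p}.
           lin_det \<theta> \<xi> nb u (db - kb + 1) (nb * u - (kb * u + v)) (db - kb + 1 + hb - \<delta>)
             p (ifam p) R {..<b}
             (\<lambda>c. Hval \<theta> u (db - kb + 1) (db - kb + 1 + hb - \<delta>) c p (ifam p) i a m)))) \<and>
    (\<forall>b R'. u - v + 1 \<le> b \<and> b \<le> u \<and> R' \<subseteq> {..<nb} - ifam ` {..<hb} \<and> card R' = db + 1 \<longrightarrow>
      (\<forall>a < (db - kb + 1) ^ nb. \<forall>m \<in> {u - v..<b}.
        (\<forall>x < db - kb + 1.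
           lin_det \<theta> \<xi> nb u (db - kb + 1) (nb * u - (kb * u + v)) (db - kb + 1 + hb - \<delta>)
             p (ifam p) R' {u - v..<b}
             (\<lambda>c. Nodeval \<theta> u c ((p + x) mod (db - kb + 1 + hb - \<delta>)) (ifam p) a m)) \<and>
        (\<forall>i \<in> ifam ` {..<hb} - {ifam p}.
           lin_det \<theta> \<xi> nb u (db - kb + 1) (nb * u - (kb * u + v)) (db - kb + 1 + hb - \<delta>)
             p (ifam p) R' {u - v..<b}
             (\<lambda>c. Hval \<theta> u (db - kb + 1) (db - kb + 1 + hb - \<delta>) c p (ifam p) i a m))))"
proof -
  let ?s = "db - kb + 1" and ?r = "nb * u - (kb * u + v)"
  have theta: "\<theta> ^ u = 1" using assms(10) by (simp add: has_mult_order_def)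
  have "4 \<le> nb * u * ?s" using assms(1,2) mult_le_mono[of 2 nb 2 u] by (simp add: le_trans)
  then have nz: "\<xi> \<noteq> 0" using primitive_elem_nonzero[OF assms(11)] assms(9) by simp
  have s: "0 < ?s" and L: "0 < ?s + hb - \<delta>" and u: "0 < u" using assms(2,5) by simp_all
  have F: "ifam ` {..<hb} \<subseteq> {..<nb}" "ifam p \<in> ifam ` {..<hb}" using assms(13,14) by simp_all
  note repair = repair_lin_det[OF assms(11) nz assms(9) u s L theta F]
  have low: "\<forall>m\<in>{..<b}. \<forall>w<nb - kb. m + u * w < ?r" if "b \<le> u - v" for b
    using that check_row_lt_redundancy_low by auto
  have high: "\<forall>m\<in>{u - v..<b}. \<forall>w<nb - kb - 1. m + u * w < ?r" if "b \<le> u" for b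
    using that assms(3) check_row_lt_redundancy_high by auto
  show ?thesis
    using repair[OF _ _ low finite_lessThan] repair[OF _ _ high finite_atLeastLessThan] assms(1,6)
    by auto
qed

end
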